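(* There do not exist positive rational numbers $x_1,x_2,x_3,d_1,d_2,d_3$ satisfying $$x_1^2+x_2^2+x_3^2=1,\quad x_2^2+x_3^2=d_1^2,\quad x_3^2+x_1^2=d_2^2,\quad x_1^2+x_2^2=d_3^2$$ together with a rational number $c$ such that $$e_{[1,1]}=c,\qquad e_{[0,1]}=c,\qquad e_{[1,0]}=-c-1.$$ In other words, no rational perfect cuboid with unit space diagonal corresponds to the one-parameter family $E_{11}=c$, $E_{01}=c$, $E_{10}=-c-1$ of rational solutions of the equation $(2E_{11})^2+(E_{01}^2+1-E_{10}^2)^2=8E_{01}^2$.
   Context: A rational perfect cuboid with unit space diagonal is a tuple of positive rationals $x_1,x_2,x_3$ (edges) and $d_1,d_2,d_3$ (face diagonals) satisfying $x_1^2+x_2^2+x_3^2=1$, $x_2^2+x_3^2=d_1^2$, $x_3^2+x_1^2=d_2^2$, $x_1^2+x_2^2=d_3^2$. (Integer perfect cuboids, i.e. cuboids with integer edges, integer face diagonals and integer space diagonal $L$, correspond to these after dividing by $L$.) The elementary multisymmetric polynomials used are $e_{[1,0]}=x_1+x_2+x_3$, $e_{[0,1]}=d_1+d_2+d_3$, and $e_{[1,1]}=x_1d_2+d_1x_2+x_2d_3+d_2x_3+x_3d_1+d_3x_1$. *)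

theory Defs
  imports Complex_Main
begin

definition e10 :: "rat \<Rightarrow> rat \<Rightarrow> rat \<Rightarrow> rat" where
  "e10 x1 x2 x3 = x1 + x2 + x3"

definition e01 :: "rat \<Rightarrow> rat \<Rightarrow> rat \<Rightarrow> rat" where
  "e01 d1 d2 d3 = d1 + d2 + d3"

definition e11 :: "rat \<Rightarrow> rat \<Rightarrow> rat \<Rightarrow> rat \<Rightarrow> rat \<Rightarrow> rat \<Rightarrow> rat" where
  "e11 x1 x2 x3 d1 d2 d3 = x1*d2 + d1*x2 + x2*d3 + d2*x3 + x3*d1 + d3*x1"

end

theory Submission
  imports Defs
begin

(* The family E11 = c, E01 = c, E10 = -c - 1 is excluded by a sign argument alone.
   For a cuboid with positive edges x1, x2, x3 and positive face diagonals d1, d2, d3,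
   both elementary multisymmetric sums e[1,0] = x1 + x2 + x3 and e[0,1] = d1 + d2 + d3
   are positive, so their sum is positive. Along the family, however,
   e[1,0] + e[0,1] = (-c - 1) + c = -1. The Pythagorean relations of the cuboid
   and the value of e[1,1] are not needed. *)

lemma e10_pos:
  assumes "x1 > 0" "x2 > 0" "x3 > 0"
  shows "e10 x1 x2 x3 > 0"
  using assms by (simp add: e10_def)

lemma e01_pos:
  assumes "d1 > 0" "d2 > 0" "d3 > 0"
  shows "e01 d1 d2 d3 > 0"
  using assms by (simp add: e01_def)

theorem theorem5p1:
  shows "\<not> (\<exists>x1 x2 x3 d1 d2 d3 c :: rat.
     x1 > 0 \<and> x2 > 0 \<and> x3 > 0 \<and> d1 > 0 \<and> d2 > 0 \<and> d3 > 0 \<and>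
     x1^2 + x2^2 + x3^2 = 1 \<and>
     x2^2 + x3^2 = d1^2 \<and> x3^2 + x1^2 = d2^2 \<and> x1^2 + x2^2 = d3^2 \<and>
     e11 x1 x2 x3 d1 d2 d3 = c \<and> e01 d1 d2 d3 = c \<and> e10 x1 x2 x3 = - c - 1)"
proof
  assume "\<exists>x1 x2 x3 d1 d2 d3 c :: rat.
     x1 > 0 \<and> x2 > 0 \<and> x3 > 0 \<and> d1 > 0 \<and> d2 > 0 \<and> d3 > 0 \<and>
     x1^2 + x2^2 + x3^2 = 1 \<and>
     x2^2 + x3^2 = d1^2 \<and> x3^2 + x1^2 = d2^2 \<and> x1^2 + x2^2 = d3^2 \<and>
     e11 x1 x2 x3 d1 d2 d3 = c \<and> e01 d1 d2 d3 = c \<and> e10 x1 x2 x3 = - c - 1"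
  then obtain x1 x2 x3 d1 d2 d3 c :: rat where
    edges: "x1 > 0" "x2 > 0" "x3 > 0" and diagonals: "d1 > 0" "d2 > 0" "d3 > 0" and
    E01: "e01 d1 d2 d3 = c" and E10: "e10 x1 x2 x3 = - c - 1"
    by blast
  have "e10 x1 x2 x3 + e01 d1 d2 d3 > 0"
    using e10_pos[OF edges] e01_pos[OF diagonals] by simp
  moreover have "e10 x1 x2 x3 + e01 d1 d2 d3 = -1"
    using E01 E10 by simp
  ultimately show False by simp
qed

end
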